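(* Let $n\in\mathbb{N}$ and let $c_n$ be the entire function $c_n(\eta)=\sum_{l=0}^\infty c(n;l)\eta^{2nl}$, where $$c(n;l)=\frac{(-1)^l n}{(2n)^{2l+\frac{1}{2n}}\,\Gamma\!\left(l+\frac{1}{2n}\right)\,l!}.$$ Then for every $\omega\in\mathbb{R}$, $$e^{-\frac{\omega^{2n}}{2n}}=\int_{-\infty}^{\infty}c_n(\omega t)\,e^{-\frac{t^{2n}}{2n}}\,dt=\int_{-\infty}^{\infty}\sum_{l=0}^\infty c(n;l)(\omega t)^{2nl}e^{-\frac{t^{2n}}{2n}}\,dt.$$ *)

theory Defs
  imports "HOL-Analysis.Analysis"
begin

definition coef :: "nat \<Rightarrow> nat \<Rightarrow> real" where
  "coef n l = ((-1) ^ l * real n) /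
     ((2 * real n) powr (2 * real l + 1 / (2 * real n)) *
      Gamma (real l + 1 / (2 * real n)) * fact l)"

definition cfun :: "nat \<Rightarrow> real \<Rightarrow> real" where
  "cfun n \<eta> = (\<Sum>l. coef n l * \<eta> ^ (2 * n * l))"

end

theory Submission
  imports Defs
begin

text \<open>With \<open>a = \<omega>^(2n)/(2n)\<close>, the substitution \<open>u = t^(2n)/(2n)\<close> turns the moment
  \<open>\<integral> t^(2nl) exp (-t^(2n)/(2n)) dt\<close> into \<open>2 (2n)^(p-1) \<Gamma>(p)\<close> with \<open>p = l + 1/(2n)\<close>.
  This cancels the Gamma factor in \<open>c(n;l)\<close>, so the \<open>l\<close>-th term of the series integrates
  to \<open>(-a)^l / l!\<close> and its absolute value to \<open>a^l / l!\<close>. The latter are summable, so the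
  series can be integrated termwise, giving the exponential series of \<open>-a\<close>.\<close>

lemma nn_integral_atLeast_SUP:
  fixes f :: "real \<Rightarrow> real" and s :: "nat \<Rightarrow> real"
  assumes "incseq s" and unbounded: "\<And>x. \<exists>m. x \<le> s m"
    and [measurable]: "f \<in> borel_measurable borel"
  shows "(\<integral>\<^sup>+x. f x * indicator {a..} x \<partial>lborel)
       = (SUP m. \<integral>\<^sup>+x. f x * indicator {a..s m} x \<partial>lborel)"
proof -
  have inc: "incseq (\<lambda>m x. ennreal (f x * indicator {a..s m} x))"
    using \<open>incseq s\<close> by (auto simp: incseq_def le_fun_def indicator_def intro: order_trans)
  have "(SUP m. ennreal (f x * indicator {a..s m} x)) = ennreal (f x * indicator {a..} x)" for x
  proof (cases "a \<le> x")
    case True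
    obtain m0 where "x \<le> s m0" using unbounded by blast
    then have "ennreal (f x * indicator {a..s m} x) = ennreal (f x)" if "m \<ge> m0" for m
      using True \<open>incseq s\<close> that by (auto simp: indicator_def incseq_def intro: order_trans)
    then have "(SUP m. ennreal (f x * indicator {a..s m} x)) = ennreal (f x)"
      using inc by (intro antisym SUP_least SUP_upper2[of m0]) (auto simp: indicator_def)
    then show ?thesis using True by simp
  qed simp
  then show ?thesis
    using nn_integral_monotone_convergence_SUP[OF inc] by simp
qed

lemma nn_integral_substitution_atLeast:
  fixes f g g' :: "real \<Rightarrow> real"
  assumes [measurable]: "f \<in> borel_measurable borel" "g \<in> borel_measurable borel"
      "g' \<in> borel_measurable borel"
    and deriv: "\<And>x. a \<le> x \<Longrightarrow> (g has_real_derivative g' x) (at x)"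
    and cont: "continuous_on {a..} g'"
    and nonneg: "\<And>x. a \<le> x \<Longrightarrow> 0 \<le> g' x"
    and unbounded: "\<And>y. \<exists>x\<ge>a. y \<le> g x"
  shows "(\<integral>\<^sup>+u. f u * indicator {g a..} u \<partial>lborel)
       = (\<integral>\<^sup>+t. f (g t) * g' t * indicator {a..} t \<partial>lborel)"
proof -
  have mono: "g x \<le> g y" if "a \<le> x" "x \<le> y" for x y
    using that deriv nonneg
    by (intro DERIV_nonneg_imp_nondecreasing[OF \<open>x \<le> y\<close>]) (meson order_trans)
  have inc: "incseq (\<lambda>m. g (a + real m))"
    by (intro incseq_SucI mono) auto
  have unb: "\<exists>m. y \<le> g (a + real m)" for y
  proof -
    obtain x where "a \<le> x" "y \<le> g x" using unbounded by blast
    moreover obtain m where "x - a \<le> real m" using real_arch_simple by blast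
    ultimately show ?thesis using mono[of x "a + real m"] by (intro exI[of _ m]) auto
  qed
  have "(\<integral>\<^sup>+u. f u * indicator {g a..} u \<partial>lborel)
      = (SUP m. \<integral>\<^sup>+u. f u * indicator {g a..g (a + real m)} u \<partial>lborel)"
    using inc unb by (rule nn_integral_atLeast_SUP) measurable
  also have "\<dots> = (SUP m. \<integral>\<^sup>+t. f (g t) * g' t * indicator {a..a + real m} t \<partial>lborel)"
    by (intro SUP_cong refl nn_integral_substitution)
       (auto intro: deriv nonneg continuous_on_subset[OF cont] simp: set_borel_measurable_def)
  also have "\<dots> = (\<integral>\<^sup>+t. f (g t) * g' t * indicator {a..} t \<partial>lborel)"
  proof (rule nn_integral_atLeast_SUP[symmetric])
    show "incseq (\<lambda>m. a + real m)" by (simp add: incseq_def)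
    show "\<exists>m. x \<le> a + real m" for x
      using real_arch_simple[of "x - a"] by (auto simp: algebra_simps)
  qed measurable
  finally show ?thesis .
qed

lemma nn_integral_even_function:
  fixes f :: "real \<Rightarrow> real"
  assumes [measurable]: "f \<in> borel_measurable borel" and even: "\<And>x. f (- x) = f x"
  shows "(\<integral>\<^sup>+x. f x \<partial>lborel) = 2 * (\<integral>\<^sup>+x. f x * indicator {0..} x \<partial>lborel)"
proof -
  have "(\<integral>\<^sup>+x. f x * indicator {..0} x \<partial>lborel) = (\<integral>\<^sup>+x. f x * indicator {0..} x \<partial>lborel)"
    using nn_integral_real_affine[of "\<lambda>x. ennreal (f x * indicator {..0} x)" "-1" 0]
    by (simp add: even indicator_def)
  moreover have "(\<integral>\<^sup>+x. f x \<partial>lborel)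
      = (\<integral>\<^sup>+x. f x * indicator {0..} x \<partial>lborel) + (\<integral>\<^sup>+x. f x * indicator {..0} x \<partial>lborel)"
  proof -
    have "(\<integral>\<^sup>+x. f x \<partial>lborel)
        = (\<integral>\<^sup>+x. ennreal (f x * indicator {0..} x) + ennreal (f x * indicator {..<0} x) \<partial>lborel)"
      by (intro nn_integral_cong) (auto simp: indicator_def)
    also have "\<dots> = (\<integral>\<^sup>+x. f x * indicator {0..} x \<partial>lborel) + (\<integral>\<^sup>+x. f x * indicator {..<0} x \<partial>lborel)"
      by (rule nn_integral_add) measurable
    also have "(\<integral>\<^sup>+x. f x * indicator {..<0} x \<partial>lborel) = (\<integral>\<^sup>+x. f x * indicator {..0} x \<partial>lborel)"
      using AE_lborel_singleton[of 0] by (intro nn_integral_cong_AE) (auto simp: indicator_def)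
    finally show ?thesis .
  qed
  ultimately show ?thesis by (simp add: mult_2)
qed

lemma Gamma_integrand_substitution:
  fixes t :: real and j k :: nat
  assumes "k \<ge> 1" and "t > 0"
  defines "p \<equiv> (real j + 1) / real k"
  shows "(t ^ k / k) powr (p - 1) / exp (t ^ k / k) * t ^ (k - 1)
       = k powr (1 - p) * (t ^ j * exp (- (t ^ k) / k))"
proof -
  have k: "real k > 0" using assms by simp
  have "(t ^ k / k) powr (p - 1) = (t powr real k) powr (p - 1) / k powr (p - 1)"
    using assms k by (simp add: powr_divide powr_realpow)
  also have "\<dots> = t powr (real k * (p - 1)) * k powr (1 - p)"
    by (simp add: powr_powr divide_inverse powr_minus[symmetric])
  finally have "(t ^ k / k) powr (p - 1) = t powr (real k * (p - 1)) * k powr (1 - p)" .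
  moreover have "t ^ (k - 1) = t powr (real k - 1)"
    using assms by (simp add: powr_realpow[symmetric] of_nat_diff)
  moreover have "t powr (real k * (p - 1)) * t powr (real k - 1) = t ^ j"
    using assms k by (simp add: p_def powr_add[symmetric] powr_realpow[symmetric] field_simps)
  ultimately show ?thesis
    by (simp add: exp_minus field_simps)
qed

lemma nn_integral_power_exp_power_atLeast:
  fixes j k :: nat
  assumes "k \<ge> 1"
  defines "p \<equiv> (real j + 1) / real k"
  shows "(\<integral>\<^sup>+t. t ^ j * exp (- (t ^ k) / k) * indicator {0..} t \<partial>lborel)
       = ennreal (k powr (p - 1) * Gamma p)"
proof -
  define c where "c = k powr (1 - p)"
  have k: "real k > 0" using assms by simp
  have p: "p > 0" using k by (simp add: p_def)
  have c: "c > 0" using k by (simp add: c_def)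
  have unbounded: "\<exists>x\<ge>0. y \<le> x ^ k / k" for y
  proof (intro exI conjI)
    define x where "x = max 1 (k * \<bar>y\<bar>)"
    have "x \<le> x ^ k" using assms by (intro self_le_power) (auto simp: x_def)
    moreover have "k * y \<le> x"
      unfolding x_def by (intro max.coboundedI2 mult_left_mono) auto
    ultimately show "y \<le> x ^ k / k"
      using k by (simp add: field_simps)
    show "0 \<le> x" by (simp add: x_def)
  qed
  have "ennreal (Gamma p) = (\<integral>\<^sup>+u. u powr (p - 1) / exp u * indicator {0 ^ k / k..} u \<partial>lborel)"
    using Gamma_conv_nn_integral_real[OF p] assms by (simp add: mult_ac power_0_left)
  also have "\<dots> = (\<integral>\<^sup>+t. (t ^ k / k) powr (p - 1) / exp (t ^ k / k) * t ^ (k - 1) * indicator {0..} t \<partial>lborel)"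
    by (rule nn_integral_substitution_atLeast[where g = "\<lambda>t. t ^ k / k"])
       (use assms unbounded in \<open>auto intro!: derivative_eq_intros continuous_intros simp: field_simps\<close>)
  also have "\<dots> = (\<integral>\<^sup>+t. c * ennreal (t ^ j * exp (- (t ^ k) / k) * indicator {0..} t) \<partial>lborel)"
  proof (intro nn_integral_cong_AE)
    show "AE t in lborel. ennreal ((t ^ k / k) powr (p - 1) / exp (t ^ k / k) * t ^ (k - 1) * indicator {0..} t)
        = c * ennreal (t ^ j * exp (- (t ^ k) / k) * indicator {0..} t)"
      using AE_lborel_singleton[of 0]
    proof eventually_elim
      case (elim t)
      then show ?case
        using Gamma_integrand_substitution[OF assms(1), of t j] c
        by (cases "t \<ge> 0") (auto simp: p_def c_def ennreal_mult)
    qed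
  qed
  also have "\<dots> = c * (\<integral>\<^sup>+t. t ^ j * exp (- (t ^ k) / k) * indicator {0..} t \<partial>lborel)"
    (is "_ = _ * ?I") by (rule nn_integral_cmult) measurable
  finally have "?I = ennreal (1 / c) * ennreal (Gamma p)"
    using c by (simp add: mult.assoc[symmetric] ennreal_mult[symmetric])
  also have "\<dots> = ennreal (k powr (p - 1) * Gamma p)"
    using c Gamma_real_pos[OF p] k
    by (simp add: ennreal_mult[symmetric] c_def powr_diff field_simps)
  finally show ?thesis .
qed

lemma has_bochner_integral_power_exp_power:
  fixes j k :: nat
  assumes "k \<ge> 1" "even j" "even k"
  defines "p \<equiv> (real j + 1) / real k"
  shows "has_bochner_integral lborel (\<lambda>t. t ^ j * exp (- (t ^ k) / k)) (2 * k powr (p - 1) * Gamma p)"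
proof -
  have p: "p > 0" using assms by (simp add: p_def)
  have "(\<integral>\<^sup>+t. t ^ j * exp (- (t ^ k) / k) \<partial>lborel)
      = 2 * (\<integral>\<^sup>+t. t ^ j * exp (- (t ^ k) / k) * indicator {0..} t \<partial>lborel)"
    by (rule nn_integral_even_function) (use assms in auto)
  also have "\<dots> = ennreal (2 * k powr (p - 1) * Gamma p)"
    unfolding nn_integral_power_exp_power_atLeast[OF assms(1)] p_def[symmetric]
    using Gamma_real_pos[OF p] by (simp add: ennreal_mult mult.assoc)
  finally show ?thesis
    unfolding has_bochner_integral_iff
    using Gamma_real_pos[OF p] assms
    by (subst (asm) nn_integral_eq_integrable) auto
qed

lemma coef_Suc:
  fixes n l :: nat
  assumes "n \<ge> 1"
  shows "coef n (Suc l) = - coef n l / ((2 * real n) ^ 2 * (real l + 1 / (2 * real n)) * (real l + 1))"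
proof -
  define s where "s = 1 / (2 * real n)"
  have n: "2 * real n > 0" using assms by simp
  have ls: "real l + s > 0" using n by (simp add: s_def add_nonneg_pos)
  have "real l + s \<notin> \<int>\<^sub>\<le>\<^sub>0"
    using ls nonpos_Ints_nonpos by fastforce
  then have "Gamma (real (Suc l) + s) = (real l + s) * Gamma (real l + s)"
    using Gamma_plus1[of "real l + s"] by (simp add: add_ac)
  moreover have "(2 * real n) powr (2 * real (Suc l) + s) = (2 * real n) powr (2 * real l + s) * (2 * real n) ^ 2"
  proof -
    have "2 * real (Suc l) + s = (2 * real l + s) + 2" by simp
    then show ?thesis using n by (simp only: powr_add powr_numeral)
  qed
  moreover have "Gamma (real l + s) > 0" using ls by (rule Gamma_real_pos)
  ultimately show ?thesis
    unfolding coef_def s_def[symmetric] using ls n by (simp add: field_simps)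
qed

lemma abs_coef_le:
  fixes n l :: nat
  assumes "n \<ge> 1"
  shows "\<bar>coef n l\<bar> \<le> \<bar>coef n 0\<bar> / fact l"
proof (induction l)
  case (Suc l)
  have "(2 * real n) ^ 2 * (real l + 1 / (2 * real n)) \<ge> 1"
  proof -
    have "(2 * real n) ^ 2 * (real l + 1 / (2 * real n)) \<ge> (2 * real n) ^ 2 * (1 / (2 * real n))"
      by (intro mult_left_mono) auto
    moreover have "(2 * real n) ^ 2 * (1 / (2 * real n)) = 2 * real n"
      using assms by (simp add: power2_eq_square)
    ultimately show ?thesis using assms by linarith
  qed
  then have "\<bar>coef n (Suc l)\<bar> \<le> \<bar>coef n l\<bar> / (real l + 1)"
    unfolding coef_Suc[OF assms] abs_divide abs_minus_cancel
    by (intro divide_left_mono) (auto simp: abs_mult intro!: mult_right_mono[of 1, simplified])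
  also have "\<dots> \<le> \<bar>coef n 0\<bar> / fact l / (real l + 1)"
    by (intro divide_right_mono Suc.IH) auto
  finally show ?case by (simp add: field_simps)
qed simp

lemma summable_abs_cfun_series:
  fixes n :: nat and x :: real
  assumes "n \<ge> 1"
  shows "summable (\<lambda>l. \<bar>coef n l * x ^ (2 * n * l)\<bar>)"
proof (rule summable_comparison_test)
  show "summable (\<lambda>l. \<bar>coef n 0\<bar> * ((x ^ (2 * n)) ^ l / fact l))"
    using summable_exp[of "x ^ (2 * n)"] by (intro summable_mult) (simp add: divide_inverse mult_ac)
  show "\<exists>N. \<forall>l\<ge>N. norm \<bar>coef n l * x ^ (2 * n * l)\<bar> \<le> \<bar>coef n 0\<bar> * ((x ^ (2 * n)) ^ l / fact l)"
  proof (intro exI allI impI)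
    fix l :: nat
    have "\<bar>coef n l\<bar> * \<bar>x ^ (2 * n * l)\<bar> \<le> \<bar>coef n 0\<bar> / fact l * \<bar>x ^ (2 * n * l)\<bar>"
      by (intro mult_right_mono abs_coef_le[OF assms]) auto
    moreover have "\<bar>x ^ (2 * n * l)\<bar> = (x ^ (2 * n)) ^ l"
      by (simp add: power_mult[symmetric] mult.assoc)
    ultimately show "norm \<bar>coef n l * x ^ (2 * n * l)\<bar> \<le> \<bar>coef n 0\<bar> * ((x ^ (2 * n)) ^ l / fact l)"
      by (simp add: abs_mult)
  qed
qed

lemma coef_times_moment:
  fixes n l :: nat
  assumes "n \<ge> 1"
  defines "p \<equiv> (real (2 * n * l) + 1) / real (2 * n)"
  shows "coef n l * (2 * (2 * real n) powr (p - 1) * Gamma p) = (-1) ^ l / ((2 * real n) ^ l * fact l)"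
proof -
  define A where "A = (2 * real n) powr (p - 1)"
  define B where "B = (2 * real n) powr (2 * real l + 1 / (2 * real n))"
  have n: "2 * real n > 0" using assms by simp
  have p: "p = real l + 1 / (2 * real n)" using n by (simp add: p_def add_divide_distrib)
  have "Gamma p > 0" using n by (intro Gamma_real_pos) (simp add: p add_nonneg_pos)
  moreover have "A > 0" "B > 0" using n by (simp_all add: A_def B_def)
  moreover have "A / B = 1 / (2 * real n) ^ Suc l"
  proof -
    have "(p - 1) - (2 * real l + 1 / (2 * real n)) = - real (Suc l)" by (simp add: p)
    then have "A / B = (2 * real n) powr (- real (Suc l))"
      unfolding A_def B_def by (metis powr_diff)
    then show ?thesis by (simp only: powr_minus_divide powr_realpow[OF n])
  qed
  ultimately show ?thesis
    unfolding coef_def p[symmetric] B_def[symmetric] A_def[symmetric]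
    using n by (simp add: field_simps)
qed

lemma has_bochner_integral_cfun_term:
  fixes n l :: nat and \<omega> :: real
  assumes "n \<ge> 1"
  defines "a \<equiv> \<omega> ^ (2 * n) / (2 * real n)"
  shows "has_bochner_integral lborel
           (\<lambda>t. coef n l * (\<omega> * t) ^ (2 * n * l) * exp (- (t ^ (2 * n)) / (2 * real n)))
           ((- a) ^ l / fact l)"
    and "has_bochner_integral lborel
           (\<lambda>t. \<bar>coef n l * (\<omega> * t) ^ (2 * n * l) * exp (- (t ^ (2 * n)) / (2 * real n))\<bar>)
           (a ^ l / fact l)"
proof -
  define p where "p = (real (2 * n * l) + 1) / real (2 * n)"
  define M where "M = 2 * (2 * real n) powr (p - 1) * Gamma p"
  define c where "c = coef n l * \<omega> ^ (2 * n * l)"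
  have moment: "has_bochner_integral lborel (\<lambda>t. t ^ (2 * n * l) * exp (- (t ^ (2 * n)) / (2 * real n))) M"
    using has_bochner_integral_power_exp_power[where j = "2 * n * l" and k = "2 * n"] assms
    unfolding M_def p_def by simp
  have "p > 0" using assms unfolding p_def by (intro divide_pos_pos add_nonneg_pos) auto
  then have "M \<ge> 0" by (simp add: M_def Gamma_real_pos less_imp_le)
  have "a \<ge> 0" by (simp add: a_def power_mult)
  have cM: "c * M = (- a) ^ l / fact l"
  proof -
    have "c * M = \<omega> ^ (2 * n * l) * (coef n l * M)" by (simp add: c_def)
    also have "\<dots> = (-1) ^ l * (\<omega> ^ (2 * n) / (2 * real n)) ^ l / fact l"
      using coef_times_moment[OF assms(1), of l] unfolding M_def p_def
      by (simp add: power_mult power_divide)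
    also have "\<dots> = (- a) ^ l / fact l" by (subst power_minus[of a]) (simp add: a_def)
    finally show ?thesis .
  qed
  show "has_bochner_integral lborel
           (\<lambda>t. coef n l * (\<omega> * t) ^ (2 * n * l) * exp (- (t ^ (2 * n)) / (2 * real n)))
           ((- a) ^ l / fact l)"
  proof -
    have "(\<lambda>t. coef n l * (\<omega> * t) ^ (2 * n * l) * exp (- (t ^ (2 * n)) / (2 * real n)))
        = (\<lambda>t. c * (t ^ (2 * n * l) * exp (- (t ^ (2 * n)) / (2 * real n))))"
      by (simp add: c_def power_mult_distrib fun_eq_iff)
    with has_bochner_integral_mult_right[OF moment, of c] show ?thesis by (simp only: cM)
  qed
  show "has_bochner_integral lborel
           (\<lambda>t. \<bar>coef n l * (\<omega> * t) ^ (2 * n * l) * exp (- (t ^ (2 * n)) / (2 * real n))\<bar>)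
           (a ^ l / fact l)"
  proof -
    have "(\<lambda>t. \<bar>coef n l * (\<omega> * t) ^ (2 * n * l) * exp (- (t ^ (2 * n)) / (2 * real n))\<bar>)
        = (\<lambda>t. \<bar>c\<bar> * (t ^ (2 * n * l) * exp (- (t ^ (2 * n)) / (2 * real n))))"
      by (simp add: c_def power_mult_distrib fun_eq_iff abs_mult power_mult mult.assoc)
    moreover have "\<bar>c\<bar> * M = \<bar>c * M\<bar>" using \<open>M \<ge> 0\<close> by (simp add: abs_mult)
    then have "\<bar>c\<bar> * M = a ^ l / fact l"
      using \<open>a \<ge> 0\<close> by (simp add: cM abs_divide power_abs)
    ultimately show ?thesis
      using has_bochner_integral_mult_right[OF moment, of "\<bar>c\<bar>"] by simp
  qed
qed

theorem lemma1:
  fixes n :: nat and \<omega> :: real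
  assumes "n \<ge> 1"
  shows "((\<lambda>t. cfun n (\<omega> * t) * exp (- (t ^ (2 * n)) / (2 * real n)))
           has_integral exp (- (\<omega> ^ (2 * n)) / (2 * real n))) UNIV"
proof -
  define a where "a = \<omega> ^ (2 * n) / (2 * real n)"
  define f where "f l t = coef n l * (\<omega> * t) ^ (2 * n * l) * exp (- (t ^ (2 * n)) / (2 * real n))"
    for l t
  have term_integral: "has_bochner_integral lborel (f l) ((- a) ^ l / fact l)"
    and term_norm: "has_bochner_integral lborel (\<lambda>t. norm (f l t)) (a ^ l / fact l)" for l
    using has_bochner_integral_cfun_term[OF assms, of l \<omega>] unfolding a_def f_def by simp_all
  have exp_sums: "(\<lambda>l. x ^ l / fact l) sums exp x" for x :: real
    using exp_converges[of x] by (simp add: divide_inverse mult.commute)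
  have "AE t in lborel. summable (\<lambda>l. norm (f l t))"
    using summable_mult2[OF summable_abs_cfun_series[OF assms], of _ "exp (- (t ^ (2 * n)) / (2 * real n))" for t]
    by (simp add: f_def abs_mult)
  moreover have "summable (\<lambda>l. \<integral>t. norm (f l t) \<partial>lborel)"
    unfolding has_bochner_integral_integral_eq[OF term_norm] using exp_sums[of a] by (rule sums_summable)
  ultimately have "integrable lborel (\<lambda>t. \<Sum>l. f l t)"
    and "(\<lambda>l. (- a) ^ l / fact l) sums (\<integral>t. (\<Sum>l. f l t) \<partial>lborel)"
    using integrable_suminf[of lborel f] sums_integral[of lborel f] term_integral
    by (auto simp: has_bochner_integral_iff)
  then have "((\<lambda>t. \<Sum>l. f l t) has_integral exp (- a)) UNIV"
    using has_integral_integral_real sums_unique2 exp_sums[of "- a"] by metis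
  moreover have "(\<Sum>l. f l t) = cfun n (\<omega> * t) * exp (- (t ^ (2 * n)) / (2 * real n))" for t
    unfolding f_def cfun_def
    by (rule suminf_mult2[symmetric]) (rule summable_rabs_cancel, rule summable_abs_cfun_series[OF assms])
  ultimately show ?thesis by (simp add: a_def)
qed

end
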